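(* Let $\Lambda_1,\Lambda_2$ be bivariate tail dependence functions and, for $i=1,2$, let $C_i=C^{LEV}(\cdot\,;\Lambda_i)$ be the corresponding lower extreme value copulas, with survival copulas $\widehat C_i=C^{EV}(\cdot\,;\Lambda_i)$. Then the following are equivalent: (i) $\Lambda(\boldsymbol w;C_1)\le\Lambda(\boldsymbol w;C_2)$ for all $\boldsymbol w\in[0,\infty)^2$; (ii) $\widehat C_1(\boldsymbol u)\le\widehat C_2(\boldsymbol u)$ for all $\boldsymbol u\in[0,1]^2$; (iii) $C_1(\boldsymbol u)\le C_2(\boldsymbol u)$ for all $\boldsymbol u\in[0,1]^2$; (iv) $C_1\le_{loc}C_2$.
   Context: A 2-copula is a grounded, 2-increasing function $C:[0,1]^2\to[0,1]$ with uniform margins. Its tail dependence function is $\Lambda(\boldsymbol w;C)=\lim_{s\searrow0}C(s\boldsymbol w)/s$, $\boldsymbol w\in[0,\infty)^2$. A bivariate tail dependence function is a function $\Lambda:[0,\infty)^2\to[0,\infty)$ that is the tail dependence function of some 2-copula; equivalently, $\Lambda(w_1,w_2)=(w_1+w_2)A(w_1/(w_1+w_2))$ (and $\Lambda(0,0)=0$) for a concave $A:[0,1]\to[0,1/2]$ with $0\le A(t)\le\min\{t,1-t\}$. The extreme value copula is $C^{EV}(u_1,u_2;\Lambda)=\exp(\log u_1+\log u_2+\Lambda(-\log u_1,-\log u_2))$, and the lower extreme value copula is its survival copula $C^{LEV}(u_1,u_2;\Lambda)=u_1+u_2-1+C^{EV}(1-u_1,1-u_2;\Lambda)$; it satisfies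 $\Lambda(\cdot\,;C^{LEV}(\cdot;\Lambda))=\Lambda$. $C_1\le_{loc}C_2$ means there is $\varepsilon>0$ with $C_1\le C_2$ on $B_\varepsilon(\boldsymbol 0)\cap[0,1]^2$ (Euclidean ball). *)

theory Defs
  imports "HOL-Analysis.Analysis"
begin

text \<open>A 2-copula, represented as a function of two real arguments; only its values
on the unit square matter.\<close>
definition copula2 :: "(real \<Rightarrow> real \<Rightarrow> real) \<Rightarrow> bool" where
  "copula2 C \<longleftrightarrow>
     (\<forall>u1\<in>{0..1}. \<forall>u2\<in>{0..1}. C u1 u2 \<in> {0..1}) \<and>
     (\<forall>u\<in>{0..1}. C 0 u = 0 \<and> C u 0 = 0) \<and>
     (\<forall>u\<in>{0..1}. C u 1 = u \<and> C 1 u = u) \<and>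
     (\<forall>u1\<in>{0..1}. \<forall>v1\<in>{0..1}. \<forall>u2\<in>{0..1}. \<forall>v2\<in>{0..1}.
        u1 \<le> v1 \<longrightarrow> u2 \<le> v2 \<longrightarrow> C v1 v2 - C u1 v2 - C v1 u2 + C u1 u2 \<ge> 0)"

definition tail_dep :: "(real \<Rightarrow> real \<Rightarrow> real) \<Rightarrow> real \<Rightarrow> real \<Rightarrow> real" where
  "tail_dep C w1 w2 = Lim (at_right 0) (\<lambda>s. C (s * w1) (s * w2) / s)"

definition is_btdf :: "(real \<Rightarrow> real \<Rightarrow> real) \<Rightarrow> bool" where
  "is_btdf L \<longleftrightarrow> (\<exists>C. copula2 C \<and>
     (\<forall>w1\<ge>0. \<forall>w2\<ge>0. ((\<lambda>s. C (s * w1) (s * w2) / s) \<longlongrightarrow> L w1 w2) (at_right 0)))"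

text \<open>Extreme value copula, continuously extended by 0 when an argument is 0.\<close>
definition CEV :: "(real \<Rightarrow> real \<Rightarrow> real) \<Rightarrow> real \<Rightarrow> real \<Rightarrow> real" where
  "CEV L u1 u2 = (if u1 = 0 \<or> u2 = 0 then 0
      else exp (ln u1 + ln u2 + L (- ln u1) (- ln u2)))"

text \<open>Lower extreme value copula (survival copula of the extreme value copula).\<close>
definition CLEV :: "(real \<Rightarrow> real \<Rightarrow> real) \<Rightarrow> real \<Rightarrow> real \<Rightarrow> real" where
  "CLEV L u1 u2 = u1 + u2 - 1 + CEV L (1 - u1) (1 - u2)"

definition le_loc :: "(real \<Rightarrow> real \<Rightarrow> real) \<Rightarrow> (real \<Rightarrow> real \<Rightarrow> real) \<Rightarrow> bool" where
  "le_loc C1 C2 \<longleftrightarrow> (\<exists>\<epsilon>>0. \<forall>u1\<in>{0..1}. \<forall>u2\<in>{0..1}.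
       (u1, u2) \<in> ball (0, 0) \<epsilon> \<longrightarrow> C1 u1 u2 \<le> C2 u1 u2)"

end

theory Submission
  imports Defs
begin

text \<open>A bivariate tail dependence function \<open>\<Lambda>\<close> is positively homogeneous and, like the copula it
comes from, 1-Lipschitz in each argument. The pointwise order of \<open>\<Lambda>\<^sub>1, \<Lambda>\<^sub>2\<close> on the quadrant is
the pointwise order of the extreme value copulas (substitute \<open>w = -ln u\<close>), and the reflection
\<open>u \<mapsto> 1 - u\<close> transfers it to the lower extreme value copulas. With \<open>a = -ln (1 - s w\<^sub>1)\<close>,
\<open>b = -ln (1 - s w\<^sub>2)\<close> one has \<open>C\<^sup>L\<^sup>E\<^sup>V(s w)/s = w\<^sub>1 + w\<^sub>2 + (exp (\<Lambda>(a,b) - a - b) - 1)/s\<close>; since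
\<open>a/s \<rightarrow> w\<^sub>1\<close>, \<open>b/s \<rightarrow> w\<^sub>2\<close>, homogeneity and the Lipschitz bound give \<open>\<Lambda>(a,b)/s \<rightarrow> \<Lambda>(w)\<close>, so the tail
dependence function of \<open>C\<^sup>L\<^sup>E\<^sup>V(\<cdot>;\<Lambda>)\<close> is \<open>\<Lambda>\<close>. A local order near the origin survives the limit
\<open>s \<searrow> 0\<close>, which closes the cycle of implications.\<close>

lemma copula2_swap:
  assumes C: "copula2 C"
  shows "copula2 (\<lambda>u v. C v u)"
  unfolding copula2_def
proof (intro conjI ballI impI)
  fix u1 v1 u2 v2 :: real
  assume "u1 \<in> {0..1}" "v1 \<in> {0..1}" "u2 \<in> {0..1}" "v2 \<in> {0..1}" "u1 \<le> v1" "u2 \<le> v2"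
  then have "C v2 v1 - C u2 v1 - C v2 u1 + C u2 u1 \<ge> 0"
    using C unfolding copula2_def by simp
  then show "C v2 v1 - C v2 u1 - C u2 v1 + C u2 u1 \<ge> 0" by linarith
qed (use C in \<open>auto simp: copula2_def\<close>)

lemma copula2_mono_lipschitz_left:
  assumes C: "copula2 C" and a: "a \<in> {0..1}" and b: "b \<in> {0..1}" and z: "z \<in> {0..1}"
    and "a \<le> b"
  shows "0 \<le> C b z - C a z \<and> C b z - C a z \<le> b - a"
proof -
  have rect: "C v1 v2 - C u1 v2 - C v1 u2 + C u1 u2 \<ge> 0"
    if "u1 \<in> {0..1}" "v1 \<in> {0..1}" "u2 \<in> {0..1}" "v2 \<in> {0..1}" "u1 \<le> v1" "u2 \<le> v2"
    for u1 v1 u2 v2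
    using C that unfolding copula2_def by blast
  have margins: "C x 0 = 0 \<and> C x 1 = x" if "x \<in> {0..1}" for x
    using C that unfolding copula2_def by blast
  have "C b 1 - C a 1 - C b z + C a z \<ge> 0" "C b z - C a z - C b 0 + C a 0 \<ge> 0"
    using rect[OF a b z _ \<open>a \<le> b\<close>] rect[OF a b _ z \<open>a \<le> b\<close>] z by auto
  then show ?thesis using margins[OF a] margins[OF b] by auto
qed

lemma copula2_lipschitz_left:
  assumes "copula2 C" "u \<in> {0..1}" "v \<in> {0..1}" "z \<in> {0..1}"
  shows "\<bar>C u z - C v z\<bar> \<le> \<bar>u - v\<bar>"
  using copula2_mono_lipschitz_left[OF assms(1,2,3,4)] copula2_mono_lipschitz_left[OF assms(1,3,2,4)]
  by (cases "u \<le> v") auto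

lemma eventually_at_right_0_scaled_unit:
  fixes w :: real
  assumes "w \<ge> 0"
  shows "\<forall>\<^sub>F s in at_right 0. 0 < s \<and> s * w \<in> {0..<1}"
proof -
  have "((\<lambda>s. s * w) \<longlongrightarrow> 0 * w) (at_right 0)"
    by (intro tendsto_intros tendsto_ident_at)
  then have "\<forall>\<^sub>F s in at_right 0. s * w < 1"
    by (intro order_tendstoD(2)) auto
  with eventually_at_right_less[of "0::real"] show ?thesis
    by eventually_elim (use assms in auto)
qed

lemma is_btdf_swap:
  assumes "is_btdf L"
  shows "is_btdf (\<lambda>x y. L y x)"
  using assms copula2_swap unfolding is_btdf_def by blast

lemma btdf_lipschitz_left:
  assumes L: "is_btdf L" and x: "x \<ge> 0" and x': "x' \<ge> 0" and y: "y \<ge> 0"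
  shows "\<bar>L x y - L x' y\<bar> \<le> \<bar>x - x'\<bar>"
proof -
  obtain C where C: "copula2 C" and lim: "\<And>w1 w2. w1 \<ge> 0 \<Longrightarrow> w2 \<ge> 0 \<Longrightarrow>
     ((\<lambda>s. C (s * w1) (s * w2) / s) \<longlongrightarrow> L w1 w2) (at_right 0)"
    using L unfolding is_btdf_def by blast
  have "((\<lambda>s. \<bar>C (s * x) (s * y) / s - C (s * x') (s * y) / s\<bar>) \<longlongrightarrow> \<bar>L x y - L x' y\<bar>) (at_right 0)"
    by (intro tendsto_intros lim x x' y)
  moreover have "\<forall>\<^sub>F s in at_right 0. \<bar>C (s * x) (s * y) / s - C (s * x') (s * y) / s\<bar> \<le> \<bar>x - x'\<bar>"
    using eventually_at_right_0_scaled_unit[OF x] eventually_at_right_0_scaled_unit[OF x']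
      eventually_at_right_0_scaled_unit[OF y]
  proof eventually_elim
    case (elim s)
    then have "\<bar>C (s * x) (s * y) - C (s * x') (s * y)\<bar> \<le> s * \<bar>x - x'\<bar>"
      using copula2_lipschitz_left[OF C, of "s * x" "s * x'" "s * y"]
      by (simp add: abs_mult flip: right_diff_distrib)
    with elim show ?case
      by (simp add: divide_le_eq mult.commute flip: diff_divide_distrib)
  qed
  ultimately show ?thesis
    using tendsto_le[OF trivial_limit_at_right_real tendsto_const] by blast
qed

lemma btdf_lipschitz:
  assumes L: "is_btdf L" and "x \<ge> 0" "x' \<ge> 0" "y \<ge> 0" "y' \<ge> 0"
  shows "\<bar>L x y - L x' y'\<bar> \<le> \<bar>x - x'\<bar> + \<bar>y - y'\<bar>"
  using btdf_lipschitz_left[OF L, of x x' y] btdf_lipschitz_left[OF is_btdf_swap[OF L], of y y' x'] assms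
  by linarith

lemma btdf_homogeneous:
  assumes L: "is_btdf L" and t: "t > 0" and w1: "w1 \<ge> 0" and w2: "w2 \<ge> 0"
  shows "L (t * w1) (t * w2) = t * L w1 w2"
proof -
  obtain C where lim: "\<And>w1 w2. w1 \<ge> 0 \<Longrightarrow> w2 \<ge> 0 \<Longrightarrow>
     ((\<lambda>s. C (s * w1) (s * w2) / s) \<longlongrightarrow> L w1 w2) (at_right 0)"
    using L unfolding is_btdf_def by blast
  have "filterlim (\<lambda>s. s * t) (at_right 0) (at_right 0)"
    unfolding filterlim_at
  proof
    show "\<forall>\<^sub>F s in at_right 0. s * t \<in> {0<..} \<and> s * t \<noteq> 0"
      using eventually_at_right_less[of 0] by (rule eventually_mono) (use t in auto)
    show "((\<lambda>s. s * t) \<longlongrightarrow> 0) (at_right 0)"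
      by (rule tendsto_eq_intros) (auto intro: tendsto_ident_at)
  qed
  from filterlim_compose[OF lim[OF w1 w2] this]
  have "((\<lambda>s. t * (C ((s * t) * w1) ((s * t) * w2) / (s * t))) \<longlongrightarrow> t * L w1 w2) (at_right 0)"
    by (intro tendsto_intros) simp
  moreover have "(\<lambda>s. t * (C ((s * t) * w1) ((s * t) * w2) / (s * t))) = (\<lambda>s. C (s * (t * w1)) (s * (t * w2)) / s)"
    using t by (auto simp: fun_eq_iff mult.assoc mult.commute[of t])
  ultimately show ?thesis
    using lim[of "t * w1" "t * w2"] t w1 w2 tendsto_unique[OF trivial_limit_at_right_real] by auto
qed

lemma tendsto_minus_ln_one_minus_quot:
  fixes w :: real
  shows "((\<lambda>s. - ln (1 - s * w) / s) \<longlongrightarrow> w) (at_right 0)"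
proof -
  have "((\<lambda>s. - ln (1 - s * w)) has_real_derivative w) (at 0)"
    by (auto intro!: derivative_eq_intros)
  then have "((\<lambda>s. - ln (1 - s * w) / s) \<longlongrightarrow> w) (at 0)"
    by (simp add: has_field_derivative_iff)
  then show ?thesis by (rule tendsto_mono[OF at_le, rotated]) simp
qed

lemma tendsto_quot_compose_deriv:
  fixes f \<phi> :: "real \<Rightarrow> real"
  assumes f: "(f has_real_derivative D) (at 0)" "f 0 = 0"
    and \<phi>: "((\<lambda>s. \<phi> s / s) \<longlongrightarrow> c) (at_right 0)"
  shows "((\<lambda>s. f (\<phi> s) / s) \<longlongrightarrow> D * c) (at_right 0)"
proof -
  \<comment> \<open>Writing \<open>f y = q y * y\<close> with the continuous difference quotient \<open>q\<close> avoids dividing by \<open>\<phi> s\<close>, which may vanish.\<close>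
  define q where "q y = (if y = 0 then D else f y / y)" for y
  have "((\<lambda>y. f y / y) \<longlongrightarrow> D) (at 0)"
    using f by (simp add: has_field_derivative_iff)
  then have "isCont q 0"
    unfolding isCont_def q_def by (subst LIM_equal[where g="\<lambda>y. f y / y"]) auto
  have "((\<lambda>s. s * (\<phi> s / s)) \<longlongrightarrow> 0) (at_right 0)"
    using tendsto_mult[OF tendsto_ident_at \<phi>] by simp
  moreover have "\<forall>\<^sub>F s in at_right 0. s * (\<phi> s / s) = \<phi> s"
    using eventually_at_right_less by (rule eventually_mono) simp
  ultimately have "(\<phi> \<longlongrightarrow> 0) (at_right 0)"
    by (rule Lim_transform_eventually)
  from tendsto_mult[OF isCont_tendsto_compose[OF \<open>isCont q 0\<close> this] \<phi>]
  have "((\<lambda>s. q (\<phi> s) * (\<phi> s / s)) \<longlongrightarrow> D * c) (at_right 0)"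
    by (simp add: q_def)
  moreover have "q (\<phi> s) * \<phi> s = f (\<phi> s)" for s
    using f(2) by (simp add: q_def)
  ultimately show ?thesis by simp
qed

lemma btdf_tendsto_scaled:
  assumes L: "is_btdf L" and w: "w1 \<ge> 0" "w2 \<ge> 0"
    and a: "((\<lambda>s. a s / s) \<longlongrightarrow> w1) (at_right 0)" and b: "((\<lambda>s. b s / s) \<longlongrightarrow> w2) (at_right 0)"
    and nonneg: "\<forall>\<^sub>F s in at_right 0. a s \<ge> 0 \<and> b s \<ge> 0"
  shows "((\<lambda>s. L (a s) (b s) / s) \<longlongrightarrow> L w1 w2) (at_right 0)"
proof -
  have "((\<lambda>s. \<bar>a s / s - w1\<bar> + \<bar>b s / s - w2\<bar>) \<longlongrightarrow> 0) (at_right 0)"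
    using tendsto_add[OF tendsto_rabs[OF LIM_zero[OF a]] tendsto_rabs[OF LIM_zero[OF b]]] by simp
  moreover have "\<forall>\<^sub>F s in at_right 0. norm (L (a s / s) (b s / s) - L w1 w2)
      \<le> \<bar>a s / s - w1\<bar> + \<bar>b s / s - w2\<bar>"
    using nonneg eventually_at_right_less[of "0::real"]
  proof eventually_elim
    case (elim s)
    then have "a s / s \<ge> 0" "b s / s \<ge> 0" by auto
    from btdf_lipschitz[OF L this(1) w(1) this(2) w(2)] show ?case by simp
  qed
  ultimately have "((\<lambda>s. L (a s / s) (b s / s) - L w1 w2) \<longlongrightarrow> 0) (at_right 0)"
    by (rule Lim_null_comparison[rotated])
  then have "((\<lambda>s. L (a s / s) (b s / s)) \<longlongrightarrow> L w1 w2) (at_right 0)"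
    by (rule LIM_zero_cancel)
  moreover have "\<forall>\<^sub>F s in at_right 0. L (a s / s) (b s / s) = L (a s) (b s) / s"
    using nonneg eventually_at_right_less[of "0::real"]
  proof eventually_elim
    case (elim s)
    then have "a s / s \<ge> 0" "b s / s \<ge> 0" by auto
    from btdf_homogeneous[OF L elim(2) this]
    have "L (s * (a s / s)) (s * (b s / s)) = s * L (a s / s) (b s / s)" .
    with elim show ?case by simp
  qed
  ultimately show ?thesis by (rule Lim_transform_eventually)
qed

lemma tendsto_CLEV_scaled:
  assumes L: "is_btdf L" and w: "w1 \<ge> 0" "w2 \<ge> 0"
  shows "((\<lambda>s. CLEV L (s * w1) (s * w2) / s) \<longlongrightarrow> L w1 w2) (at_right 0)"
proof -
  define a where "a s = - ln (1 - s * w1)" for s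
  define b where "b s = - ln (1 - s * w2)" for s
  define \<phi> where "\<phi> s = - a s - b s + L (a s) (b s)" for s
  have a: "((\<lambda>s. a s / s) \<longlongrightarrow> w1) (at_right 0)"
    unfolding a_def by (rule tendsto_minus_ln_one_minus_quot)
  have b: "((\<lambda>s. b s / s) \<longlongrightarrow> w2) (at_right 0)"
    unfolding b_def by (rule tendsto_minus_ln_one_minus_quot)
  have small: "\<forall>\<^sub>F s in at_right 0. 0 < s \<and> s * w1 \<in> {0..<1} \<and> s * w2 \<in> {0..<1}"
    using eventually_at_right_0_scaled_unit[OF w(1)] eventually_at_right_0_scaled_unit[OF w(2)]
    by eventually_elim auto
  then have "\<forall>\<^sub>F s in at_right 0. a s \<ge> 0 \<and> b s \<ge> 0"
    by eventually_elim (auto simp: a_def b_def)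
  from btdf_tendsto_scaled[OF L w a b this]
  have "((\<lambda>s. - (a s / s) - b s / s + L (a s) (b s) / s) \<longlongrightarrow> - w1 - w2 + L w1 w2) (at_right 0)"
    by (intro tendsto_intros a b)
  then have "((\<lambda>s. \<phi> s / s) \<longlongrightarrow> - w1 - w2 + L w1 w2) (at_right 0)"
    by (simp add: \<phi>_def diff_divide_distrib add_divide_distrib)
  moreover have "((\<lambda>y. exp y - 1) has_real_derivative 1) (at 0)"
    by (auto intro!: derivative_eq_intros)
  ultimately have "((\<lambda>s. (exp (\<phi> s) - 1) / s) \<longlongrightarrow> 1 * (- w1 - w2 + L w1 w2)) (at_right 0)"
    by (intro tendsto_quot_compose_deriv) auto
  then have "((\<lambda>s. w1 + w2 + (exp (\<phi> s) - 1) / s) \<longlongrightarrow> L w1 w2) (at_right 0)"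
    using tendsto_add[OF tendsto_const[of "w1 + w2"]] by fastforce
  moreover have "\<forall>\<^sub>F s in at_right 0. w1 + w2 + (exp (\<phi> s) - 1) / s = CLEV L (s * w1) (s * w2) / s"
    using small
  proof eventually_elim
    case (elim s)
    then have "CEV L (1 - s * w1) (1 - s * w2) = exp (\<phi> s)"
      by (simp add: CEV_def \<phi>_def a_def b_def)
    with elim show ?case
      by (simp add: CLEV_def field_simps)
  qed
  ultimately show ?thesis by (rule Lim_transform_eventually)
qed

lemma tail_dep_CLEV:
  assumes "is_btdf L" "w1 \<ge> 0" "w2 \<ge> 0"
  shows "tail_dep (CLEV L) w1 w2 = L w1 w2"
  unfolding tail_dep_def by (rule tendsto_Lim[OF trivial_limit_at_right_real tendsto_CLEV_scaled[OF assms]])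

lemma tail_limit_mono_le_loc:
  assumes loc: "le_loc C1 C2" and w: "w1 \<ge> 0" "w2 \<ge> 0"
    and lim1: "((\<lambda>s. C1 (s * w1) (s * w2) / s) \<longlongrightarrow> l1) (at_right 0)"
    and lim2: "((\<lambda>s. C2 (s * w1) (s * w2) / s) \<longlongrightarrow> l2) (at_right 0)"
  shows "l1 \<le> l2"
proof -
  obtain \<epsilon> where "\<epsilon> > 0" and le: "\<And>u1 u2. u1 \<in> {0..1} \<Longrightarrow> u2 \<in> {0..1} \<Longrightarrow>
      (u1, u2) \<in> ball (0, 0) \<epsilon> \<Longrightarrow> C1 u1 u2 \<le> C2 u1 u2"
    using loc unfolding le_loc_def by blast
  have "((\<lambda>s. (s * w1, s * w2)) \<longlongrightarrow> (0 * w1, 0 * w2)) (at_right 0)"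
    by (intro tendsto_intros tendsto_ident_at)
  then have "\<forall>\<^sub>F s in at_right 0. (s * w1, s * w2) \<in> ball (0, 0) \<epsilon>"
    using \<open>\<epsilon> > 0\<close> by (intro topological_tendstoD) auto
  with eventually_at_right_0_scaled_unit[OF w(1)] eventually_at_right_0_scaled_unit[OF w(2)]
  have "\<forall>\<^sub>F s in at_right 0. C1 (s * w1) (s * w2) / s \<le> C2 (s * w1) (s * w2) / s"
  proof eventually_elim
    case (elim s)
    then have "C1 (s * w1) (s * w2) \<le> C2 (s * w1) (s * w2)"
      by (intro le) auto
    with elim show ?case by (simp add: divide_right_mono)
  qed
  from tendsto_le[OF trivial_limit_at_right_real lim2 lim1 this] show ?thesis .
qed

lemma CEV_le_iff:
  "(\<forall>u1\<in>{0..1}. \<forall>u2\<in>{0..1}. CEV L1 u1 u2 \<le> CEV L2 u1 u2)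
     \<longleftrightarrow> (\<forall>w1\<ge>0. \<forall>w2\<ge>0. L1 w1 w2 \<le> (L2 w1 w2 :: real))"
proof
  assume le: "\<forall>u1\<in>{0..1}. \<forall>u2\<in>{0..1}. CEV L1 u1 u2 \<le> CEV L2 u1 u2"
  show "\<forall>w1\<ge>0. \<forall>w2\<ge>0. L1 w1 w2 \<le> L2 w1 w2"
  proof (intro allI impI)
    fix w1 w2 :: real
    assume "w1 \<ge> 0" "w2 \<ge> 0"
    then have "CEV L1 (exp (- w1)) (exp (- w2)) \<le> CEV L2 (exp (- w1)) (exp (- w2))"
      using le by simp
    then show "L1 w1 w2 \<le> L2 w1 w2" by (simp add: CEV_def)
  qed
next
  assume le: "\<forall>w1\<ge>0. \<forall>w2\<ge>0. L1 w1 w2 \<le> L2 w1 w2"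
  show "\<forall>u1\<in>{0..1}. \<forall>u2\<in>{0..1}. CEV L1 u1 u2 \<le> CEV L2 u1 u2"
  proof (intro ballI)
    fix u1 u2 :: real
    assume u: "u1 \<in> {0..1}" "u2 \<in> {0..1}"
    show "CEV L1 u1 u2 \<le> CEV L2 u1 u2"
    proof (cases "u1 = 0 \<or> u2 = 0")
      case False
      with u have "- ln u1 \<ge> 0" "- ln u2 \<ge> 0" by auto
      with le False show ?thesis by (simp add: CEV_def)
    qed (auto simp: CEV_def)
  qed
qed

lemma CLEV_le_iff_CEV_le:
  "(\<forall>u1\<in>{0..1}. \<forall>u2\<in>{0..1}. CLEV L1 u1 u2 \<le> CLEV L2 u1 u2)
     \<longleftrightarrow> (\<forall>u1\<in>{0..1}. \<forall>u2\<in>{0..1}. CEV L1 u1 u2 \<le> CEV L2 u1 u2)"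
proof (intro iffI ballI)
  fix u1 u2 :: real
  assume "\<forall>u1\<in>{0..1}. \<forall>u2\<in>{0..1}. CLEV L1 u1 u2 \<le> CLEV L2 u1 u2"
    and "u1 \<in> {0..1}" "u2 \<in> {0..1}"
  then have "CLEV L1 (1 - u1) (1 - u2) \<le> CLEV L2 (1 - u1) (1 - u2)" by simp
  then show "CEV L1 u1 u2 \<le> CEV L2 u1 u2" by (simp add: CLEV_def)
next
  fix u1 u2 :: real
  assume "\<forall>u1\<in>{0..1}. \<forall>u2\<in>{0..1}. CEV L1 u1 u2 \<le> CEV L2 u1 u2"
    and "u1 \<in> {0..1}" "u2 \<in> {0..1}"
  then have "CEV L1 (1 - u1) (1 - u2) \<le> CEV L2 (1 - u1) (1 - u2)" by simp
  then show "CLEV L1 u1 u2 \<le> CLEV L2 u1 u2" by (simp add: CLEV_def)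
qed

theorem mainTheorem9:
  fixes L1 L2 :: "real \<Rightarrow> real \<Rightarrow> real"
  assumes "is_btdf L1" and "is_btdf L2"
  shows "((\<forall>w1\<ge>0. \<forall>w2\<ge>0. tail_dep (CLEV L1) w1 w2 \<le> tail_dep (CLEV L2) w1 w2)
          \<longleftrightarrow> (\<forall>u1\<in>{0..1}. \<forall>u2\<in>{0..1}. CEV L1 u1 u2 \<le> CEV L2 u1 u2)) \<and>
         ((\<forall>u1\<in>{0..1}. \<forall>u2\<in>{0..1}. CEV L1 u1 u2 \<le> CEV L2 u1 u2)
          \<longleftrightarrow> (\<forall>u1\<in>{0..1}. \<forall>u2\<in>{0..1}. CLEV L1 u1 u2 \<le> CLEV L2 u1 u2)) \<and>
         ((\<forall>u1\<in>{0..1}. \<forall>u2\<in>{0..1}. CLEV L1 u1 u2 \<le> CLEV L2 u1 u2)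
          \<longleftrightarrow> le_loc (CLEV L1) (CLEV L2))"
proof -
  let ?tail = "\<forall>w1\<ge>0. \<forall>w2\<ge>0. tail_dep (CLEV L1) w1 w2 \<le> tail_dep (CLEV L2) w1 w2"
  let ?btdf = "\<forall>w1\<ge>0. \<forall>w2\<ge>0. L1 w1 w2 \<le> L2 w1 w2"
  let ?lev = "\<forall>u1\<in>{0..1}. \<forall>u2\<in>{0..1}. CLEV L1 u1 u2 \<le> CLEV L2 u1 u2"
  have "?tail \<longleftrightarrow> ?btdf"
    using tail_dep_CLEV[OF assms(1)] tail_dep_CLEV[OF assms(2)] by simp
  moreover have "?lev \<Longrightarrow> le_loc (CLEV L1) (CLEV L2)"
    unfolding le_loc_def by (intro exI[of _ 1]) auto
  moreover have "le_loc (CLEV L1) (CLEV L2) \<Longrightarrow> ?btdf"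
    using tail_limit_mono_le_loc tendsto_CLEV_scaled[OF assms(1)] tendsto_CLEV_scaled[OF assms(2)]
    by blast
  ultimately show ?thesis
    using CEV_le_iff[of L1 L2] CLEV_le_iff_CEV_le[of L1 L2] by blast
qed

end
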